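(* Let $H_A,H_B$ be finite-dimensional complex Hilbert spaces, $h_{1A},h_{2A}$ subspaces of $H_A$, $h_{1B},h_{2B}$ subspaces of $H_B$, and $h_1=h_{1A}\otimes h_{1B}$, $h_2=h_{2A}\otimes h_{2B}$. Suppose $[\Pi_A(h_{1A}),\Pi_A(h_{2A})]=0$ and $[\Pi_B(h_{1B}),\Pi_B(h_{2B})]=0$. Then for every unit vector $\ket s\in H_A\otimes H_B$, $\bra s\Pi(h_1\vee h_2)\ket s\le \bra s\,\Pi_A(h_{1A})\otimes\Pi_B(h_{1B})\,\ket s+\bra s\,\Pi_A(h_{2A})\otimes\Pi_B(h_{2B})\,\ket s.$
   Context: $\Pi_A(k)$, $\Pi_B(k)$, $\Pi(k)$ denote orthogonal projectors onto a subspace $k$ of $H_A$, $H_B$, $H_A\otimes H_B$ respectively. $h\vee h'=\mathrm{span}(h\cup h')$. For subspaces $k_A\subseteq H_A$, $k_B\subseteq H_B$, $k_A\otimes k_B$ is the subspace spanned by all $\ket a\otimes\ket b$, $\ket a\in k_A$, $\ket b\in k_B$. *)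

theory Defs
  imports Complex_Main
begin

text \<open>A finite-dimensional complex Hilbert space with orthonormal basis indexed by a
finite type 'a is modelled as the space of functions 'a => complex with the standard
inner product. H_A (x) H_B is modelled as ('a * 'b) => complex.\<close>

definition cinner :: "('a::finite \<Rightarrow> complex) \<Rightarrow> ('a \<Rightarrow> complex) \<Rightarrow> complex" where
  "cinner u v = (\<Sum>i\<in>UNIV. cnj (u i) * v i)"

definition cscale :: "complex \<Rightarrow> ('a \<Rightarrow> complex) \<Rightarrow> ('a \<Rightarrow> complex)" where
  "cscale c v = (\<lambda>i. c * v i)"

definition csubspace :: "('a \<Rightarrow> complex) set \<Rightarrow> bool" where
  "csubspace S \<longleftrightarrow> (\<lambda>i. 0) \<in> S \<and> (\<forall>x\<in>S. \<forall>y\<in>S. (\<lambda>i. x i + y i) \<in> S)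
     \<and> (\<forall>c. \<forall>x\<in>S. cscale c x \<in> S)"

definition cspan :: "('a \<Rightarrow> complex) set \<Rightarrow> ('a \<Rightarrow> complex) set" where
  "cspan X = \<Inter>{S. csubspace S \<and> X \<subseteq> S}"

definition ssup :: "('a \<Rightarrow> complex) set \<Rightarrow> ('a \<Rightarrow> complex) set \<Rightarrow> ('a \<Rightarrow> complex) set" where
  "ssup h h' = cspan (h \<union> h')"

definition proj :: "('a::finite \<Rightarrow> complex) set \<Rightarrow> ('a \<Rightarrow> complex) \<Rightarrow> ('a \<Rightarrow> complex)" where
  "proj S v = (THE p. p \<in> S \<and> (\<forall>w\<in>S. cinner w (\<lambda>i. v i - p i) = 0))"

definition tens :: "('a \<Rightarrow> complex) \<Rightarrow> ('b \<Rightarrow> complex) \<Rightarrow> ('a \<times> 'b \<Rightarrow> complex)" where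
  "tens a b = (\<lambda>(i, j). a i * b j)"

definition tens_sub :: "('a \<Rightarrow> complex) set \<Rightarrow> ('b \<Rightarrow> complex) set \<Rightarrow> ('a \<times> 'b \<Rightarrow> complex) set" where
  "tens_sub kA kB = cspan {tens a b | a b. a \<in> kA \<and> b \<in> kB}"

definition basis_vec :: "'a \<Rightarrow> ('a \<Rightarrow> complex)" where
  "basis_vec k = (\<lambda>k'. if k' = k then 1 else 0)"

definition op_tens :: "(('a::finite \<Rightarrow> complex) \<Rightarrow> ('a \<Rightarrow> complex)) \<Rightarrow> (('b::finite \<Rightarrow> complex) \<Rightarrow> ('b \<Rightarrow> complex))
     \<Rightarrow> ('a \<times> 'b \<Rightarrow> complex) \<Rightarrow> ('a \<times> 'b \<Rightarrow> complex)" where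
  "op_tens P Q v = (\<lambda>(i, j). \<Sum>(k, l)\<in>UNIV. P (basis_vec k) i * Q (basis_vec l) j * v (k, l))"

end

theory Submission
  imports Defs "HOL-Analysis.Finite_Cartesian_Product" "HOL-Analysis.Linear_Algebra"
begin

text \<open>
  Write \<open>R\<^sub>k = \<Pi>\<^sub>A(h\<^sub>k\<^sub>A) \<otimes> \<Pi>\<^sub>B(h\<^sub>k\<^sub>B)\<close>. This is the orthogonal projector onto \<open>h\<^sub>k\<close>, and
  the commutation hypotheses make \<open>R\<^sub>1\<close> and \<open>R\<^sub>2\<close> commute, with product
  \<open>(\<Pi>\<^sub>A(h\<^sub>1\<^sub>A)\<Pi>\<^sub>A(h\<^sub>2\<^sub>A)) \<otimes> (\<Pi>\<^sub>B(h\<^sub>1\<^sub>B)\<Pi>\<^sub>B(h\<^sub>2\<^sub>B))\<close>. For commuting projectors the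
  projector onto the span of their ranges is \<open>R\<^sub>1 + R\<^sub>2 - R\<^sub>1R\<^sub>2\<close>, and \<open>R\<^sub>1R\<^sub>2\<close> is itself a
  projector, hence positive. So \<open>\<langle>s|\<Pi>(h\<^sub>1 \<or> h\<^sub>2)|s\<rangle> = \<langle>s|R\<^sub>1|s\<rangle> + \<langle>s|R\<^sub>2|s\<rangle> - \<langle>s|R\<^sub>1R\<^sub>2|s\<rangle>\<close>
  is at most \<open>\<langle>s|R\<^sub>1|s\<rangle> + \<langle>s|R\<^sub>2|s\<rangle>\<close>.
\<close>

lemma cinner_add_left: "cinner (\<lambda>i. x i + y i) z = cinner x z + cinner y z"
  unfolding cinner_def by (simp add: distrib_right sum.distrib)

lemma cinner_add_right: "cinner x (\<lambda>i. y i + z i) = cinner x y + cinner x z"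
  unfolding cinner_def by (simp add: distrib_left sum.distrib)

lemma cinner_diff_left: "cinner (\<lambda>i. x i - y i) z = cinner x z - cinner y z"
  unfolding cinner_def by (simp add: left_diff_distrib sum_subtractf)

lemma cinner_diff_right: "cinner x (\<lambda>i. y i - z i) = cinner x y - cinner x z"
  unfolding cinner_def by (simp add: right_diff_distrib sum_subtractf)

lemma cinner_scale_left: "cinner (cscale c x) y = cnj c * cinner x y"
  unfolding cinner_def cscale_def by (simp add: sum_distrib_left algebra_simps)

lemma cinner_scale_right: "cinner x (cscale c y) = c * cinner x y"
  unfolding cinner_def cscale_def by (simp add: sum_distrib_left algebra_simps)

lemma cinner_zero_left [simp]: "cinner (\<lambda>i. 0) x = 0"
  unfolding cinner_def by simp

lemma cinner_zero_right [simp]: "cinner x (\<lambda>i. 0) = 0"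
  unfolding cinner_def by simp

lemma cinner_commute: "cinner y x = cnj (cinner x y)"
  unfolding cinner_def by (simp add: mult.commute)

lemma cinner_self: "cinner x x = of_real (\<Sum>i\<in>UNIV. (cmod (x i))\<^sup>2)"
  unfolding cinner_def of_real_sum
  by (intro sum.cong refl) (metis complex_norm_square mult.commute)

lemma Re_cinner_self_nonneg: "Re (cinner x x) \<ge> 0"
  unfolding cinner_self by (simp add: sum_nonneg)

lemma cinner_self_eq_zero: "cinner x x = 0 \<Longrightarrow> x = (\<lambda>i. 0)"
  unfolding cinner_self of_real_eq_0_iff by (simp add: sum_nonneg_eq_0_iff fun_eq_iff)

lemma cinner_basis_vec_left: "cinner (basis_vec i) x = x i"
proof -
  have "cinner (basis_vec i) x = (\<Sum>k\<in>UNIV. if i = k then x k else 0)"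
    unfolding cinner_def basis_vec_def by (rule sum.cong) auto
  then show ?thesis by simp
qed

lemma cinner_basis_vec_right: "cinner x (basis_vec i) = cnj (x i)"
  using cinner_basis_vec_left[of i x] cinner_commute[of x "basis_vec i"] by simp

lemma csubspace_zero: "csubspace S \<Longrightarrow> (\<lambda>i. 0) \<in> S"
  unfolding csubspace_def by blast

lemma csubspace_add: "csubspace S \<Longrightarrow> x \<in> S \<Longrightarrow> y \<in> S \<Longrightarrow> (\<lambda>i. x i + y i) \<in> S"
  unfolding csubspace_def by blast

lemma csubspace_scale: "csubspace S \<Longrightarrow> x \<in> S \<Longrightarrow> cscale c x \<in> S"
  unfolding csubspace_def by blast

lemma csubspace_diff:
  assumes "csubspace S" "x \<in> S" "y \<in> S"
  shows "(\<lambda>i. x i - y i) \<in> S"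
proof -
  have "(\<lambda>i. x i + cscale (-1) y i) \<in> S"
    using assms by (blast intro: csubspace_add csubspace_scale)
  then show ?thesis by (simp add: cscale_def)
qed

lemma csubspace_sum:
  assumes "csubspace S" "finite A" "\<And>k. k \<in> A \<Longrightarrow> g k \<in> S"
  shows "(\<lambda>i. \<Sum>k\<in>A. g k i) \<in> S"
  using assms(2,3)
  by (induction A rule: finite_induct) (simp_all add: csubspace_zero csubspace_add assms(1))

lemma csubspace_cspan: "csubspace (cspan X)"
  unfolding cspan_def csubspace_def by auto

lemma cspan_superset: "X \<subseteq> cspan X"
  unfolding cspan_def by auto

lemma cspan_least: "csubspace S \<Longrightarrow> X \<subseteq> S \<Longrightarrow> cspan X \<subseteq> S"
  unfolding cspan_def by auto

lemma csubspace_orthogonal: "csubspace {w. cinner w x = 0}"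
  unfolding csubspace_def by (simp add: cinner_add_left cinner_scale_left)

lemma cspan_orthogonal:
  "(\<And>w. w \<in> X \<Longrightarrow> cinner w x = 0) \<Longrightarrow> w \<in> cspan X \<Longrightarrow> cinner w x = 0"
  using cspan_least[OF csubspace_orthogonal, of X x] by blast

definition clinear_map :: "(('a::finite \<Rightarrow> complex) \<Rightarrow> ('b::finite \<Rightarrow> complex)) \<Rightarrow> bool" where
  "clinear_map F \<longleftrightarrow> (\<forall>x y. F (\<lambda>i. x i + y i) = (\<lambda>i. F x i + F y i))
     \<and> (\<forall>c x. F (cscale c x) = cscale c (F x))"

lemma clinear_map_add: "clinear_map F \<Longrightarrow> F (\<lambda>i. x i + y i) = (\<lambda>i. F x i + F y i)"
  unfolding clinear_map_def by blast

lemma clinear_map_scale: "clinear_map F \<Longrightarrow> F (cscale c x) = cscale c (F x)"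
  unfolding clinear_map_def by blast

lemma clinear_map_zero: "clinear_map F \<Longrightarrow> F (\<lambda>i. 0) = (\<lambda>i. 0)"
  using clinear_map_scale[of F 0 "\<lambda>i. 0"] by (simp add: cscale_def)

lemma clinear_map_diff: "clinear_map F \<Longrightarrow> F (\<lambda>i. x i - y i) = (\<lambda>i. F x i - F y i)"
  using clinear_map_add[of F x "cscale (-1) y"] clinear_map_scale[of F "-1" y]
  by (simp add: cscale_def)

lemma clinear_map_sum:
  assumes "clinear_map F" "finite A"
  shows "F (\<lambda>i. \<Sum>k\<in>A. g k i) = (\<lambda>i. \<Sum>k\<in>A. F (g k) i)"
  using assms(2)
  by (induction A rule: finite_induct)
    (simp_all add: clinear_map_zero clinear_map_add[OF assms(1)] assms(1))

lemma clinear_map_comp: "clinear_map F \<Longrightarrow> clinear_map G \<Longrightarrow> clinear_map (F \<circ> G)"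
  unfolding clinear_map_def by simp

lemma basis_vec_expansion:
  fixes x :: "'a::finite \<Rightarrow> complex"
  shows "x = (\<lambda>i. \<Sum>k\<in>UNIV. cscale (x k) (basis_vec k) i)"
  by (simp add: fun_eq_iff cscale_def basis_vec_def if_distrib cong: if_cong)

lemma clinear_map_expansion:
  assumes F: "clinear_map F"
  shows "F x = (\<lambda>i. \<Sum>k\<in>UNIV. x k * F (basis_vec k) i)"
proof -
  have "F x = (\<lambda>i. \<Sum>k\<in>UNIV. F (cscale (x k) (basis_vec k)) i)"
    by (subst basis_vec_expansion) (simp add: clinear_map_sum[OF F])
  then show ?thesis by (simp only: clinear_map_scale[OF F]) (simp add: cscale_def)
qed

lemma clinear_map_eqI:
  "clinear_map F \<Longrightarrow> clinear_map G \<Longrightarrow> (\<And>k. F (basis_vec k) = G (basis_vec k)) \<Longrightarrow> F = G"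
  by (rule ext, subst (1 2) clinear_map_expansion) simp_all

lemma csubspace_fixed_points: "clinear_map F \<Longrightarrow> csubspace {x. F x = x}"
  unfolding csubspace_def by (simp add: clinear_map_zero clinear_map_add clinear_map_scale)

subsection \<open>Orthogonal projection\<close>

lemma inner_vec_lambda: "inner (vec_lambda x :: complex^'a::finite) (vec_lambda y) = Re (cinner x y)"
  unfolding inner_vec_def cinner_def inner_complex_def by (simp add: Re_sum)

text \<open>
  A complex subspace is in particular a real subspace of \<open>complex^'a\<close>, where the library
  supplies orthogonal decompositions; real orthogonality to the complex subspace \<open>S\<close>
  then gives complex orthogonality because \<open>S\<close> is closed under multiplication by \<open>\<i>\<close>.
\<close>
lemma orthogonal_decomposition_exists:
  fixes S :: "('a::finite \<Rightarrow> complex) set"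
  assumes S: "csubspace S"
  shows "\<exists>p\<in>S. \<forall>w\<in>S. cinner w (\<lambda>i. v i - p i) = 0"
proof -
  define S' where "S' = (vec_lambda ` S :: (complex^'a) set)"
  have "subspace S'"
    unfolding subspace_def S'_def
  proof (intro conjI ballI allI)
    show "0 \<in> vec_lambda ` S"
      using csubspace_zero[OF S] by (metis image_eqI zero_vec_def)
  next
    fix x y assume "x \<in> vec_lambda ` S" "y \<in> vec_lambda ` S"
    then obtain a b where "a \<in> S" "b \<in> S" "x = vec_lambda a" "y = vec_lambda b" by auto
    moreover have "x + y = vec_lambda (\<lambda>i. a i + b i)"
      using calculation by (simp add: vec_eq_iff)
    ultimately show "x + y \<in> vec_lambda ` S" using csubspace_add[OF S] by blast
  next
    fix c :: real and x assume "x \<in> vec_lambda ` S"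
    then obtain a where "a \<in> S" "x = vec_lambda a" by auto
    moreover have "c *\<^sub>R x = vec_lambda (cscale (of_real c) a)"
      using calculation by (simp add: vec_eq_iff cscale_def complex_eq_iff)
    ultimately show "c *\<^sub>R x \<in> vec_lambda ` S" using csubspace_scale[OF S] by blast
  qed
  then obtain y z where y: "y \<in> S'" and z: "\<And>w. w \<in> S' \<Longrightarrow> inner w z = 0"
    and yz: "vec_lambda v = y + z"
    using orthogonal_subspace_decomp_exists[of S' "vec_lambda v"]
    by (metis span_eq_iff orthogonal_def inner_commute)
  obtain p where p: "p \<in> S" "y = vec_lambda p" using y unfolding S'_def by auto
  have z_eq: "z = vec_lambda (\<lambda>i. v i - p i)"
    using yz p(2) by (simp add: vec_eq_iff)
  have Re_zero: "Re (cinner w (\<lambda>i. v i - p i)) = 0" if "w \<in> S" for w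
    using z[of "vec_lambda w"] that unfolding S'_def z_eq inner_vec_lambda by simp
  have "cinner w (\<lambda>i. v i - p i) = 0" if "w \<in> S" for w
  proof -
    have "Re (cinner (cscale \<i> w) (\<lambda>i. v i - p i)) = 0"
      by (rule Re_zero[OF csubspace_scale[OF S that]])
    then have "Im (cinner w (\<lambda>i. v i - p i)) = 0"
      by (simp only: cinner_scale_left) simp
    with Re_zero[OF that] show ?thesis by (simp add: complex_eq_iff)
  qed
  with p(1) show ?thesis by blast
qed

lemma orthogonal_decomposition_unique:
  assumes S: "csubspace S"
    and p: "p \<in> S" "\<forall>w\<in>S. cinner w (\<lambda>i. v i - p i) = 0"
    and q: "q \<in> S" "\<forall>w\<in>S. cinner w (\<lambda>i. v i - q i) = 0"
  shows "p = q"
proof -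
  let ?d = "\<lambda>i. p i - q i"
  have "?d \<in> S" by (rule csubspace_diff[OF S p(1) q(1)])
  have "cinner ?d ?d = cinner ?d (\<lambda>i. (v i - q i) - (v i - p i))"
    by (rule arg_cong[where f = "cinner ?d"]) (simp add: fun_eq_iff)
  also have "\<dots> = cinner ?d (\<lambda>i. v i - q i) - cinner ?d (\<lambda>i. v i - p i)"
    by (rule cinner_diff_right)
  also have "\<dots> = 0"
    using p(2) q(2) \<open>?d \<in> S\<close> by simp
  finally have "?d = (\<lambda>i. 0)" by (rule cinner_self_eq_zero)
  then show ?thesis by (simp add: fun_eq_iff)
qed

lemma proj_in_orthogonal:
  assumes S: "csubspace S"
  shows "proj S v \<in> S \<and> (\<forall>w\<in>S. cinner w (\<lambda>i. v i - proj S v i) = 0)"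
proof -
  obtain p where p: "p \<in> S \<and> (\<forall>w\<in>S. cinner w (\<lambda>i. v i - p i) = 0)"
    using orthogonal_decomposition_exists[OF S, of v] by blast
  then show ?thesis
    unfolding proj_def
    by (rule theI[where P = "\<lambda>p. p \<in> S \<and> (\<forall>w\<in>S. cinner w (\<lambda>i. v i - p i) = 0)"])
      (use p orthogonal_decomposition_unique[OF S] in blast)
qed

lemma proj_in: "csubspace S \<Longrightarrow> proj S v \<in> S"
  using proj_in_orthogonal by blast

lemma proj_orthogonal: "csubspace S \<Longrightarrow> w \<in> S \<Longrightarrow> cinner w (\<lambda>i. v i - proj S v i) = 0"
  using proj_in_orthogonal by blast

lemma proj_eqI:
  assumes "csubspace S" "p \<in> S" "\<And>w. w \<in> S \<Longrightarrow> cinner w (\<lambda>i. v i - p i) = 0"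
  shows "proj S v = p"
  using assms proj_in_orthogonal orthogonal_decomposition_unique by blast

lemma proj_fixed: "csubspace S \<Longrightarrow> v \<in> S \<Longrightarrow> proj S v = v"
  by (rule proj_eqI) simp_all

lemma proj_idem: "csubspace S \<Longrightarrow> proj S (proj S v) = proj S v"
  by (rule proj_fixed[OF _ proj_in])

lemma proj_add:
  assumes S: "csubspace S"
  shows "proj S (\<lambda>i. x i + y i) = (\<lambda>i. proj S x i + proj S y i)"
proof (rule proj_eqI[OF S csubspace_add[OF S proj_in[OF S] proj_in[OF S]]])
  fix w assume "w \<in> S"
  then show "cinner w (\<lambda>i. x i + y i - (proj S x i + proj S y i)) = 0"
    using cinner_add_right[of w "\<lambda>i. x i - proj S x i" "\<lambda>i. y i - proj S y i"]
    by (simp add: proj_orthogonal[OF S] algebra_simps)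
qed

lemma proj_scale:
  assumes S: "csubspace S"
  shows "proj S (cscale c x) = cscale c (proj S x)"
proof (rule proj_eqI[OF S csubspace_scale[OF S proj_in[OF S]]])
  fix w assume "w \<in> S"
  then show "cinner w (\<lambda>i. cscale c x i - cscale c (proj S x) i) = 0"
    using cinner_scale_right[of w c "\<lambda>i. x i - proj S x i"]
    by (simp add: proj_orthogonal[OF S] cscale_def algebra_simps)
qed

lemma clinear_map_proj: "csubspace S \<Longrightarrow> clinear_map (proj S)"
  unfolding clinear_map_def by (simp add: proj_add proj_scale)

lemma proj_self_adjoint:
  assumes S: "csubspace S"
  shows "cinner x (proj S y) = cinner (proj S x) y"
proof -
  have "cinner (\<lambda>i. x i - proj S x i) (proj S y) = 0"
    using proj_orthogonal[OF S proj_in[OF S], of y x] by (subst cinner_commute) simp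
  moreover have "cinner (proj S x) (\<lambda>i. y i - proj S y i) = 0"
    by (rule proj_orthogonal[OF S proj_in[OF S]])
  ultimately show ?thesis by (simp add: cinner_diff_left cinner_diff_right)
qed

lemma Re_cinner_proj_comp_nonneg:
  assumes "csubspace S" "csubspace T" "proj S \<circ> proj T = proj T \<circ> proj S"
  shows "Re (cinner v (proj S (proj T v))) \<ge> 0"
proof -
  have comm: "proj S (proj T x) = proj T (proj S x)" for x
    using assms(3) by (metis comp_apply)
  have "cinner v (proj S (proj T v)) = cinner (proj S v) (proj T (proj S v))"
    by (metis assms(1) proj_idem proj_self_adjoint comm)
  also have "\<dots> = cinner (proj T (proj S v)) (proj T (proj S v))"
    by (metis assms(2) proj_idem proj_self_adjoint)
  finally show ?thesis by (simp add: Re_cinner_self_nonneg)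
qed

lemma cinner_diff_eq_zero_if_proj_eq:
  assumes S: "csubspace S" and w: "w \<in> S" and eq: "proj S x = proj S y"
  shows "cinner w (\<lambda>i. x i - y i) = 0"
proof -
  have "cinner w (\<lambda>i. x i - y i) = cinner w (proj S (\<lambda>i. x i - y i))"
    using proj_self_adjoint[OF S, of w] proj_fixed[OF S w] by simp
  also have "\<dots> = 0"
    by (simp add: clinear_map_diff[OF clinear_map_proj[OF S]] eq)
  finally show ?thesis .
qed

lemma proj_ssup_commuting:
  assumes S: "csubspace S" and T: "csubspace T"
    and comm: "proj S \<circ> proj T = proj T \<circ> proj S"
  shows "proj (ssup S T) v = (\<lambda>i. proj S v i + proj T v i - proj S (proj T v) i)"
    (is "_ = ?t")
proof -
  have TS: "proj T (proj S x) = proj S (proj T x)" for x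
    using comm by (metis comp_apply)
  have U: "csubspace (ssup S T)" and SU: "S \<subseteq> ssup S T" and TU: "T \<subseteq> ssup S T"
    unfolding ssup_def using csubspace_cspan cspan_superset by blast+
  have "proj S v \<in> ssup S T" "proj T v \<in> ssup S T" "proj S (proj T v) \<in> ssup S T"
    using SU TU proj_in[OF S] proj_in[OF T] by blast+
  then have t_in: "?t \<in> ssup S T"
    by (rule csubspace_diff[OF U csubspace_add[OF U]])
  have "proj S v = proj S ?t"
    by (simp only: clinear_map_diff[OF clinear_map_proj[OF S]] clinear_map_add[OF clinear_map_proj[OF S]])
      (simp add: proj_idem[OF S] TS)
  moreover have "proj T v = proj T ?t"
    by (simp only: clinear_map_diff[OF clinear_map_proj[OF T]] clinear_map_add[OF clinear_map_proj[OF T]])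
      (simp add: proj_idem[OF T] TS)
  ultimately have "cinner w (\<lambda>i. v i - ?t i) = 0" if "w \<in> S \<union> T" for w
    using that cinner_diff_eq_zero_if_proj_eq[OF S] cinner_diff_eq_zero_if_proj_eq[OF T] by blast
  then show ?thesis
    using proj_eqI[OF U t_in] cspan_orthogonal unfolding ssup_def by blast
qed

subsection \<open>Tensor products of operators\<close>

definition self_adjoint :: "(('a::finite \<Rightarrow> complex) \<Rightarrow> ('a \<Rightarrow> complex)) \<Rightarrow> bool" where
  "self_adjoint F \<longleftrightarrow> (\<forall>x y. cinner x (F y) = cinner (F x) y)"

lemma self_adjoint_matrix_entry: "self_adjoint F \<Longrightarrow> cnj (F (basis_vec i) k) = F (basis_vec k) i"
  unfolding self_adjoint_def by (metis cinner_basis_vec_left cinner_basis_vec_right)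

lemma self_adjoint_hermitian_kernel:
  assumes K: "\<And>m n. cnj (K n m) = K m n"
  shows "self_adjoint (\<lambda>y m. \<Sum>n\<in>UNIV. K m n * y n)"
  unfolding self_adjoint_def
proof (intro allI)
  fix x y :: "'a \<Rightarrow> complex"
  have "cinner x (\<lambda>m. \<Sum>n\<in>UNIV. K m n * y n) = (\<Sum>m\<in>UNIV. \<Sum>n\<in>UNIV. cnj (x m) * K m n * y n)"
    unfolding cinner_def by (simp add: sum_distrib_left mult.assoc)
  also have "\<dots> = (\<Sum>n\<in>UNIV. \<Sum>m\<in>UNIV. cnj (x m) * K m n * y n)"
    by (rule sum.swap)
  also have "\<dots> = cinner (\<lambda>n. \<Sum>m\<in>UNIV. K n m * x m) y"
    unfolding cinner_def cnj_sum complex_cnj_mult K sum_distrib_right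
    by (intro sum.cong refl) (simp add: mult_ac)
  finally show "cinner x (\<lambda>m. \<Sum>n\<in>UNIV. K m n * y n) = cinner (\<lambda>n. \<Sum>m\<in>UNIV. K n m * x m) y" .
qed

definition op_tens_kernel ::
  "(('a::finite \<Rightarrow> complex) \<Rightarrow> ('a \<Rightarrow> complex)) \<Rightarrow> (('b::finite \<Rightarrow> complex) \<Rightarrow> ('b \<Rightarrow> complex))
    \<Rightarrow> 'a \<times> 'b \<Rightarrow> 'a \<times> 'b \<Rightarrow> complex" where
  "op_tens_kernel P Q m n = P (basis_vec (fst n)) (fst m) * Q (basis_vec (snd n)) (snd m)"

lemma op_tens_eq_kernel: "op_tens P Q v = (\<lambda>m. \<Sum>n\<in>UNIV. op_tens_kernel P Q m n * v n)"
  by (auto simp: op_tens_def op_tens_kernel_def fun_eq_iff case_prod_beta)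

lemma clinear_map_op_tens: "clinear_map (op_tens P Q)"
  unfolding clinear_map_def op_tens_eq_kernel cscale_def
  by (simp add: distrib_left sum.distrib sum_distrib_left algebra_simps)

lemma self_adjoint_op_tens:
  assumes "self_adjoint P" "self_adjoint Q"
  shows "self_adjoint (op_tens P Q)"
  unfolding op_tens_eq_kernel[abs_def]
  by (rule self_adjoint_hermitian_kernel)
    (simp add: op_tens_kernel_def self_adjoint_matrix_entry[OF assms(1)]
      self_adjoint_matrix_entry[OF assms(2)])

lemma op_tens_tens:
  assumes P: "clinear_map P" and Q: "clinear_map Q"
  shows "op_tens P Q (tens a b) = tens (P a) (Q b)"
proof (rule ext, clarify)
  fix i j
  have "op_tens P Q (tens a b) (i, j)
      = (\<Sum>k\<in>UNIV. \<Sum>l\<in>UNIV. (a k * P (basis_vec k) i) * (b l * Q (basis_vec l) j))"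
    unfolding op_tens_eq_kernel op_tens_kernel_def tens_def
    by (simp add: sum.cartesian_product case_prod_beta algebra_simps flip: UNIV_Times_UNIV)
  also have "\<dots> = (\<Sum>k\<in>UNIV. a k * P (basis_vec k) i) * (\<Sum>l\<in>UNIV. b l * Q (basis_vec l) j)"
    by (simp add: sum_product)
  also have "\<dots> = tens (P a) (Q b) (i, j)"
    by (simp add: tens_def clinear_map_expansion[OF P, of a] clinear_map_expansion[OF Q, of b])
  finally show "op_tens P Q (tens a b) (i, j) = tens (P a) (Q b) (i, j)" .
qed

lemma basis_vec_pair: "basis_vec (k, l) = tens (basis_vec k) (basis_vec l)"
  by (auto simp: basis_vec_def tens_def fun_eq_iff)

lemma clinear_map_eq_on_tens:
  fixes F G :: "('a::finite \<times> 'b::finite \<Rightarrow> complex) \<Rightarrow> ('c::finite \<Rightarrow> complex)"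
  assumes "clinear_map F" "clinear_map G" "\<And>a b. F (tens a b) = G (tens a b)"
  shows "F = G"
  by (rule clinear_map_eqI[OF assms(1,2)]) (metis assms(3) basis_vec_pair surj_pair)

lemma op_tens_comp:
  assumes "clinear_map P" "clinear_map Q" "clinear_map P'" "clinear_map Q'"
  shows "op_tens P Q \<circ> op_tens P' Q' = op_tens (P \<circ> P') (Q \<circ> Q')"
  by (rule clinear_map_eq_on_tens)
    (simp_all add: clinear_map_comp clinear_map_op_tens op_tens_tens assms)

lemma csubspace_tens_sub: "csubspace (tens_sub hA hB)"
  unfolding tens_sub_def by (rule csubspace_cspan)

lemma op_tens_in_tens_sub:
  assumes "\<And>k. P (basis_vec k) \<in> hA" "\<And>l. Q (basis_vec l) \<in> hB"
  shows "op_tens P Q v \<in> tens_sub hA hB"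
proof -
  have "op_tens P Q v
      = (\<lambda>m. \<Sum>n\<in>UNIV. cscale (v n) (tens (P (basis_vec (fst n))) (Q (basis_vec (snd n)))) m)"
    unfolding op_tens_eq_kernel op_tens_kernel_def cscale_def tens_def
    by (auto simp: fun_eq_iff case_prod_beta mult.commute)
  also have "\<dots> \<in> tens_sub hA hB"
    unfolding tens_sub_def
    by (intro csubspace_sum csubspace_scale csubspace_cspan cspan_superset[THEN subsetD])
      (auto intro: assms)
  finally show ?thesis .
qed

lemma proj_eq_self_adjoint:
  assumes S: "csubspace S" and F: "self_adjoint F"
    and range: "\<And>v. F v \<in> S" and fixed: "\<And>w. w \<in> S \<Longrightarrow> F w = w"
  shows "proj S = F"
proof (rule ext, rule proj_eqI[OF S range])
  fix v w assume "w \<in> S"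
  have "cinner w (F v) = cinner (F w) v"
    using F unfolding self_adjoint_def by blast
  also have "\<dots> = cinner w v"
    by (simp add: fixed \<open>w \<in> S\<close>)
  finally show "cinner w (\<lambda>i. v i - F v i) = 0" by (simp add: cinner_diff_right)
qed

lemma proj_tens_sub:
  assumes A: "csubspace hA" and B: "csubspace hB"
  shows "proj (tens_sub hA hB) = op_tens (proj hA) (proj hB)"
proof (rule proj_eq_self_adjoint)
  show "csubspace (tens_sub hA hB)"
    by (rule csubspace_tens_sub)
  show "self_adjoint (op_tens (proj hA) (proj hB))"
    by (intro self_adjoint_op_tens) (simp_all add: self_adjoint_def proj_self_adjoint A B)
  show "op_tens (proj hA) (proj hB) v \<in> tens_sub hA hB" for v
    by (rule op_tens_in_tens_sub) (simp_all add: proj_in A B)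
  have "op_tens (proj hA) (proj hB) (tens a b) = tens a b" if "a \<in> hA" "b \<in> hB" for a b
    using that by (simp add: op_tens_tens clinear_map_proj proj_fixed A B)
  then have "tens_sub hA hB \<subseteq> {x. op_tens (proj hA) (proj hB) x = x}"
    unfolding tens_sub_def
    by (intro cspan_least[OF csubspace_fixed_points[OF clinear_map_op_tens]]) blast
  then show "op_tens (proj hA) (proj hB) w = w" if "w \<in> tens_sub hA hB" for w
    using that by blast
qed

theorem mainTheorem4:
  fixes h1A h2A :: "('a::finite \<Rightarrow> complex) set"
    and h1B h2B :: "('b::finite \<Rightarrow> complex) set"
    and s :: "'a \<times> 'b \<Rightarrow> complex"
  assumes "csubspace h1A" "csubspace h2A" "csubspace h1B" "csubspace h2B"
    and "proj h1A \<circ> proj h2A = proj h2A \<circ> proj h1A"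
    and "proj h1B \<circ> proj h2B = proj h2B \<circ> proj h1B"
    and "cinner s s = 1"
  shows "Re (cinner s (proj (ssup (tens_sub h1A h1B) (tens_sub h2A h2B)) s))
         \<le> Re (cinner s (op_tens (proj h1A) (proj h1B) s))
          + Re (cinner s (op_tens (proj h2A) (proj h2B) s))"
proof -
  define T1 where "T1 = tens_sub h1A h1B"
  define T2 where "T2 = tens_sub h2A h2B"
  have T: "csubspace T1" "csubspace T2"
    unfolding T1_def T2_def by (simp_all add: csubspace_tens_sub)
  have proj_T: "proj T1 = op_tens (proj h1A) (proj h1B)" "proj T2 = op_tens (proj h2A) (proj h2B)"
    unfolding T1_def T2_def by (simp_all add: proj_tens_sub assms(1-4))
  have "proj T1 \<circ> proj T2 = proj T2 \<circ> proj T1"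
    unfolding proj_T using assms(1-6) by (simp add: op_tens_comp clinear_map_proj)
  then have "proj (ssup T1 T2) s = (\<lambda>i. proj T1 s i + proj T2 s i - proj T1 (proj T2 s) i)"
    and "Re (cinner s (proj T1 (proj T2 s))) \<ge> 0"
    using T by (simp_all add: proj_ssup_commuting Re_cinner_proj_comp_nonneg)
  then show ?thesis
    unfolding T1_def[symmetric] T2_def[symmetric] proj_T[symmetric]
    by (simp add: cinner_diff_right cinner_add_right)
qed

end
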